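(* Let $R$ be a commutative ring in which $2$ is invertible, let $Q=R$ with quadratic form $q(z)=z^2$, and let $m\ge1$. Identify automorphisms of $Q\perp\mathbb{H}(R)^m$ with matrices in $\mathrm{GL}_{2m+1}(R)$ via the ordered basis $(1,x_1,f_1,x_2,f_2,\dots,x_m,f_m)$. Then $\mathrm{EO}_R(Q,\mathbb{H}(R)^m)=\mathrm{EO}_{2m+1}(R)$.
   Context: For a quadratic form $q$ the bilinear form is $\langle x,y\rangle=q(x+y)-q(x)-q(y)$; thus on $Q=R$, $\langle z,z'\rangle=2zz'$. $\mathbb{H}(R)^m=\mathbb{H}(R^m)=R^m\oplus (R^m)^*$ with basis $x_1,\dots,x_m$ and dual basis $f_1,\dots,f_m$, and $q(y,g)=g(y)$; orthogonal sums carry the sum of forms. With respect to the basis above, the bilinear form on $Q\perp\mathbb{H}(R)^m$ has matrix $(2)\perp\widetilde{\psi}_m$, where $\widetilde{\psi}_s=\sum_{i=1}^s(e_{2i-1,2i}+e_{2i,2i-1})$ and $e_{i,j}$ are matrix units. DSER transformations on $Q\perp\mathbb{H}(P)$: for $\alpha:Q\to P$ let $\alpha^*:P^*\to Q$ satisfy $\langle\alpha^*(g),z\rangle=g(\alpha(z))$ and $E_\alpha(z,y,g)=(z-\alpha^*(g),y+\alpha(z)-\tfrac12\alpha\alpha^*(g),g)$; for $\beta:Q\to P^*$ let $\beta^*:P\to Q$ satisfy $\langle\beta^*(y),z\rangle=\beta(z)(y)$ and $E^*_\beta(z,y,g)=(z-\beta^*(y),y,g+\beta(z)-\tfrac12\beta\beta^*(y))$.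 $\mathrm{EO}_R(Q,\mathbb{H}(P))$ is generated by all $E_\alpha,E^*_\beta$. Odd elementary orthogonal group: for $N=2s+1$ (indices $1,\dots,2s+1$) and $1\le i\le s$, $\lambda\in R$, let $F^1_i(\lambda)=I_N+\lambda(e_{1,2i+1}-2e_{2i,1}-\lambda e_{2i,2i+1})$ and $F^2_i(\lambda)=I_N+\lambda(e_{1,2i}-2e_{2i+1,1}-\lambda e_{2i+1,2i})$ (orthogonal for $(2)\perp\widetilde{\psi}_s$). $\mathrm{EO}_{2s+1}(R)$ is the group generated by all $F^1_i(\lambda),F^2_i(\lambda)$, $\lambda\in R$. *)

theory Defs
  imports "Jordan_Normal_Form.Matrix"
begin

text \<open>Elements of Q \<perp> H(R^m) are triples (z, y, g): z in Q = R, y in R^m given by its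
coordinates y_1..y_m w.r.t. x_1..x_m, and g in (R^m)^* given by its coordinates
g_i = g(x_i) w.r.t. the dual basis f_1..f_m. Coordinates are indexed by 1..m.\<close>

definition qQ :: "'a::comm_ring_1 \<Rightarrow> 'a" where
  "qQ z = z ^ 2"

definition bilQ :: "'a::comm_ring_1 \<Rightarrow> 'a \<Rightarrow> 'a" where
  "bilQ z z' = qQ (z + z') - qQ z - qQ z'"

definition pairing :: "nat \<Rightarrow> (nat \<Rightarrow> 'a::comm_ring_1) \<Rightarrow> (nat \<Rightarrow> 'a) \<Rightarrow> 'a" where
  "pairing m g y = (\<Sum>i=1..m. g i * y i)"

definition half :: "'a::comm_ring_1" where
  "half = (SOME u. 2 * u = 1)"

text \<open>An R-linear map Q = R \<rightarrow> P = R^m is z \<mapsto> z a for a vector a; similarly for Q \<rightarrow> P^*.\<close>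

definition linmap :: "(nat \<Rightarrow> 'a::comm_ring_1) \<Rightarrow> 'a \<Rightarrow> nat \<Rightarrow> 'a" where
  "linmap a z = (\<lambda>i. z * a i)"

definition adj_alpha :: "nat \<Rightarrow> (nat \<Rightarrow> 'a::comm_ring_1) \<Rightarrow> (nat \<Rightarrow> 'a) \<Rightarrow> 'a" where
  "adj_alpha m a g = (THE w. \<forall>z. bilQ w z = pairing m g (linmap a z))"

definition adj_beta :: "nat \<Rightarrow> (nat \<Rightarrow> 'a::comm_ring_1) \<Rightarrow> (nat \<Rightarrow> 'a) \<Rightarrow> 'a" where
  "adj_beta m b y = (THE w. \<forall>z. bilQ w z = pairing m (linmap b z) y)"

definition E_alpha :: "nat \<Rightarrow> (nat \<Rightarrow> 'a::comm_ring_1)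
    \<Rightarrow> 'a \<times> (nat \<Rightarrow> 'a) \<times> (nat \<Rightarrow> 'a) \<Rightarrow> 'a \<times> (nat \<Rightarrow> 'a) \<times> (nat \<Rightarrow> 'a)" where
  "E_alpha m a = (\<lambda>(z, y, g).
     (z - adj_alpha m a g,
      (\<lambda>i. y i + linmap a z i - half * linmap a (adj_alpha m a g) i),
      g))"

definition E_beta :: "nat \<Rightarrow> (nat \<Rightarrow> 'a::comm_ring_1)
    \<Rightarrow> 'a \<times> (nat \<Rightarrow> 'a) \<times> (nat \<Rightarrow> 'a) \<Rightarrow> 'a \<times> (nat \<Rightarrow> 'a) \<times> (nat \<Rightarrow> 'a)" where
  "E_beta m b = (\<lambda>(z, y, g).
     (z - adj_beta m b y,
      y,
      (\<lambda>i. g i + linmap b z i - half * linmap b (adj_beta m b y) i)))"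

text \<open>Matrix indices are 0-based: index 0 is the basis vector 1 of Q,
index 2i-1 is x_i and index 2i is f_i (1 \<le> i \<le> m).\<close>

definition coords :: "nat \<Rightarrow> 'a::comm_ring_1 \<times> (nat \<Rightarrow> 'a) \<times> (nat \<Rightarrow> 'a) \<Rightarrow> 'a vec" where
  "coords m = (\<lambda>(z, y, g). vec (2*m+1)
     (\<lambda>k. if k = 0 then z else if odd k then y ((k+1) div 2) else g (k div 2)))"

definition elt_of :: "nat \<Rightarrow> 'a::comm_ring_1 vec \<Rightarrow> 'a \<times> (nat \<Rightarrow> 'a) \<times> (nat \<Rightarrow> 'a)" where
  "elt_of m v = (v $ 0,
     (\<lambda>i. if 1 \<le> i \<and> i \<le> m then v $ (2*i - 1) else 0),
     (\<lambda>i. if 1 \<le> i \<and> i \<le> m then v $ (2*i) else 0))"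

definition mat_of_map :: "nat \<Rightarrow> ('a::comm_ring_1 \<times> (nat \<Rightarrow> 'a) \<times> (nat \<Rightarrow> 'a)
    \<Rightarrow> 'a \<times> (nat \<Rightarrow> 'a) \<times> (nat \<Rightarrow> 'a)) \<Rightarrow> 'a mat" where
  "mat_of_map m T = mat (2*m+1) (2*m+1)
     (\<lambda>(i, j). coords m (T (elt_of m (unit_vec (2*m+1) j))) $ i)"

definition gen_group :: "nat \<Rightarrow> 'a::comm_ring_1 mat set \<Rightarrow> 'a mat set" where
  "gen_group N S = \<Inter> {H. H \<subseteq> carrier_mat N N \<and> 1\<^sub>m N \<in> H
       \<and> (\<forall>A\<in>H. \<forall>B\<in>H. A * B \<in> H)
       \<and> (\<forall>A\<in>H. \<exists>B\<in>H. A * B = 1\<^sub>m N \<and> B * A = 1\<^sub>m N)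
       \<and> S \<subseteq> H}"

definition EO_QH :: "nat \<Rightarrow> 'a::comm_ring_1 mat set" where
  "EO_QH m = gen_group (2*m+1)
     ({mat_of_map m (E_alpha m a) | a. True} \<union> {mat_of_map m (E_beta m b) | b. True})"

text \<open>Matrix unit e_{i,j} with the paper's 1-based indices (i, j in 1..N).\<close>
definition munit :: "nat \<Rightarrow> nat \<Rightarrow> nat \<Rightarrow> 'a::comm_ring_1 mat" where
  "munit N i j = mat N N (\<lambda>(r, c). if r = i - 1 \<and> c = j - 1 then 1 else 0)"

definition F1 :: "nat \<Rightarrow> nat \<Rightarrow> 'a::comm_ring_1 \<Rightarrow> 'a mat" where
  "F1 N i l = 1\<^sub>m N + l \<cdot>\<^sub>m (munit N 1 (2*i+1) - 2 \<cdot>\<^sub>m munit N (2*i) 1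
                                 - l \<cdot>\<^sub>m munit N (2*i) (2*i+1))"

definition F2 :: "nat \<Rightarrow> nat \<Rightarrow> 'a::comm_ring_1 \<Rightarrow> 'a mat" where
  "F2 N i l = 1\<^sub>m N + l \<cdot>\<^sub>m (munit N 1 (2*i) - 2 \<cdot>\<^sub>m munit N (2*i+1) 1
                                 - l \<cdot>\<^sub>m munit N (2*i+1) (2*i))"

definition EO_odd :: "nat \<Rightarrow> 'a::comm_ring_1 mat set" where
  "EO_odd s = gen_group (2*s+1)
     ({F1 (2*s+1) i l | i l. 1 \<le> i \<and> i \<le> s} \<union> {F2 (2*s+1) i l | i l. 1 \<le> i \<and> i \<le> s})"

end

theory Submission
  imports Defs
begin

text \<open>
  Since 2 is invertible, the adjoints are \<open>\<alpha>\<^sup>*(g) = g(\<alpha> 1)/2\<close> and \<open>\<beta>\<^sup>*(y) = \<beta>(1)(y)/2\<close>, so in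
  the basis \<open>(1, x\<^sub>1, f\<^sub>1, \<dots>, x\<^sub>m, f\<^sub>m)\<close> both kinds of DSER maps are matrices
  \<open>1 + u e\<^sub>0\<^sup>T - \<onehalf>(e\<^sub>0 + \<onehalf>u) w\<^sup>T\<close>, with \<open>u\<close> and \<open>w\<close> supported on complementary blocks of
  coordinates. The generators \<open>F\<^sup>1\<^sub>i(\<lambda>)\<close>, \<open>F\<^sup>2\<^sub>i(\<lambda>)\<close> are exactly the DSER maps with \<open>\<alpha>(1) = -2\<lambda> x\<^sub>i\<close>,
  resp. \<open>\<beta>(1) = -2\<lambda> f\<^sub>i\<close>. Conversely, two such maps compose to the map of the sum up to a
  correction that is skew in the two arguments, so the symmetric product
  \<open>E(\<alpha>/2) E(\<alpha>') E(\<alpha>/2) = E(\<alpha> + \<alpha>')\<close> has no correction: peeling off one coordinate of \<open>\<alpha>\<close> at a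
  time writes every DSER map as a product of the \<open>F\<close>'s. All generators being invertible, the
  two generated groups coincide.
\<close>

lemma two_mult_half:
  assumes "\<exists>u :: 'a :: comm_ring_1. 2 * u = 1"
  shows "2 * (half :: 'a) = 1"
  unfolding half_def using someI_ex[OF assms] .

lemma bilQ_eq: "bilQ w z = 2 * w * z"
  by (simp add: bilQ_def qQ_def power2_eq_square algebra_simps)

lemma the_bilQ_eq_half:
  assumes "2 * half = (1 :: 'a :: comm_ring_1)"
  shows "(THE w. \<forall>z. bilQ w z = z * c) = half * (c :: 'a)"
proof (rule the_equality)
  show "\<forall>z. bilQ (half * c) z = z * c"
  proof
    fix z
    have "bilQ (half * c) z = (2 * half) * c * z" by (simp add: bilQ_eq algebra_simps)
    then show "bilQ (half * c) z = z * c" using assms by simp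
  qed
next
  fix w assume "\<forall>z. bilQ w z = z * c"
  then have "bilQ w 1 = 1 * c" by blast
  then have "2 * w = c" by (simp add: bilQ_eq)
  then show "w = half * c" using assms by (metis mult.assoc mult.commute mult_1)
qed

lemma pairing_linmap_left: "pairing m (linmap b z) y = z * pairing m b y"
  by (simp add: pairing_def linmap_def sum_distrib_left algebra_simps)

lemma pairing_linmap_right: "pairing m g (linmap a z) = z * pairing m g a"
  by (simp add: pairing_def linmap_def sum_distrib_left algebra_simps)

lemma adj_alpha_eq:
  "2 * half = (1 :: 'a :: comm_ring_1) \<Longrightarrow> adj_alpha m a g = half * pairing m g (a :: nat \<Rightarrow> 'a)"
  unfolding adj_alpha_def pairing_linmap_right by (rule the_bilQ_eq_half)

lemma adj_beta_eq:
  "2 * half = (1 :: 'a :: comm_ring_1) \<Longrightarrow> adj_beta m b y = half * pairing m b (y :: nat \<Rightarrow> 'a)"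
  unfolding adj_beta_def pairing_linmap_left by (rule the_bilQ_eq_half)

text \<open>For \<open>E\<^sub>\<alpha>\<close>, \<open>u\<close> holds the
  coordinates of \<open>\<alpha>(1)\<close> and \<open>w\<close> those of the functional \<open>g \<mapsto> g(\<alpha>(1))\<close>; for \<open>E\<^sup>*\<^sub>\<beta>\<close> the roles
  of the \<open>x\<^sub>i\<close>- and \<open>f\<^sub>i\<close>-coordinates are swapped.\<close>
definition transvec :: "'a :: comm_ring_1 vec \<Rightarrow> 'a vec \<Rightarrow> 'a vec \<Rightarrow> 'a vec" where
  "transvec u w v = vec (dim_vec v) (\<lambda>r. v $ r + v $ 0 * u $ r
     - half * (w \<bullet> v) * ((if r = 0 then 1 else 0) + half * u $ r))"

text \<open>For two adapted pairs \<open>(u, w)\<close>, \<open>(u', w')\<close> one has \<open>w \<bullet> u' = 0\<close>, which is what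
  makes these maps compose like transvections.\<close>
definition adapted_pair :: "nat \<Rightarrow> nat set \<Rightarrow> 'a :: comm_ring_1 vec \<Rightarrow> 'a vec \<Rightarrow> bool" where
  "adapted_pair n M u w \<longleftrightarrow> u \<in> carrier_vec n \<and> w \<in> carrier_vec n \<and>
     (\<forall>k<n. (k \<notin> M \<or> k = 0 \<longrightarrow> u $ k = 0) \<and> (k \<in> M \<or> k = 0 \<longrightarrow> w $ k = 0))"

lemma index_transvec [simp]:
  "r < dim_vec v \<Longrightarrow> transvec u w v $ r = v $ r + v $ 0 * u $ r
     - half * (w \<bullet> v) * ((if r = 0 then 1 else 0) + half * u $ r)"
  "dim_vec (transvec u w v) = dim_vec v"
  by (simp_all add: transvec_def)

lemma transvec_carrier [simp]: "transvec u w v \<in> carrier_vec n \<longleftrightarrow> v \<in> carrier_vec n"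
  unfolding carrier_dim_vec by simp

lemma adapted_pair_carrier: "adapted_pair n M u w \<Longrightarrow> u \<in> carrier_vec n \<and> w \<in> carrier_vec n"
  by (simp add: adapted_pair_def)

lemma adapted_pair_index_0: "adapted_pair n M u w \<Longrightarrow> 0 < n \<Longrightarrow> u $ 0 = 0 \<and> w $ 0 = 0"
  by (simp add: adapted_pair_def)

lemma adapted_pair_uminus: "adapted_pair n M u w \<Longrightarrow> adapted_pair n M (- u) (- w)"
  by (auto simp: adapted_pair_def)

lemma scalar_prod_transvec:
  assumes "adapted_pair n M u w" "adapted_pair n M u' w'" and v: "v \<in> carrier_vec n"
  shows "w \<bullet> transvec u' w' v = w \<bullet> v"
proof -
  have "w $ k * transvec u' w' v $ k = w $ k * v $ k" if "k < n" for k
    using that assms v by (cases "k \<in> M") (auto simp: adapted_pair_def)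
  then show ?thesis using v unfolding scalar_prod_def by (intro sum.cong) auto
qed

text \<open>Identities that hold only modulo \<open>2 h = 1\<close> are proved by exhibiting the difference of
  the two sides as a multiple of \<open>2 h - 1\<close>.\<close>
lemma eq_if_diff_eq_two_half_minus_one_mult:
  "2 * h = (1 :: 'a :: comm_ring_1) \<Longrightarrow> x - y = (2 * h - 1) * z \<Longrightarrow> x = y"
  by simp

text \<open>Composing two such maps gives the map of the sum up to a correction that is skew in the
  two pairs; in the symmetric product it cancels.\<close>
lemma transvec_sandwich:
  assumes h: "2 * half = (1 :: 'a :: comm_ring_1)"
    and uw: "adapted_pair n M u w" and uw': "adapted_pair n M u' w'" and v: "v \<in> carrier_vec n"
  shows "transvec u w (transvec u' w' (transvec u w v))
    = transvec (2 \<cdot>\<^sub>v u + u') (2 \<cdot>\<^sub>v w + w') (v :: 'a vec)"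
proof (rule eq_vecI)
  fix r assume "r < dim_vec (transvec (2 \<cdot>\<^sub>v u + u') (2 \<cdot>\<^sub>v w + w') v)"
  then have r: "r < n" using v by simp
  have u0: "u $ 0 = 0" "u' $ 0 = 0"
    using r adapted_pair_index_0[OF uw] adapted_pair_index_0[OF uw'] by auto
  have carr: "u \<in> carrier_vec n" "u' \<in> carrier_vec n" "w \<in> carrier_vec n" "w' \<in> carrier_vec n"
    using uw uw' by (auto dest: adapted_pair_carrier)
  have v1: "transvec u w v \<in> carrier_vec n" using v by simp
  define d :: 'a where "d = (if r = 0 then 1 else 0)"
  define s s' where "s = w \<bullet> v" and "s' = w' \<bullet> v"
  have "w \<bullet> transvec u w v = s" "w' \<bullet> transvec u w v = s'" "w \<bullet> transvec u' w' (transvec u w v) = s"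
    using scalar_prod_transvec[OF uw uw v] scalar_prod_transvec[OF uw' uw v]
      scalar_prod_transvec[OF uw uw' v1] unfolding s_def s'_def by simp_all
  then have L: "transvec u w (transvec u' w' (transvec u w v)) $ r
      = v $ r + v $ 0 * u $ r - half * s * (d + half * u $ r)
        + (v $ 0 - half * s) * u' $ r - half * s' * (d + half * u' $ r)
        + (v $ 0 - half * s - half * s') * u $ r - half * s * (d + half * u $ r)"
    using r v u0 unfolding d_def by (simp add: s_def[symmetric])
  have "(2 \<cdot>\<^sub>v w + w') \<bullet> v = 2 * s + s'"
    using carr v unfolding s_def s'_def by (simp add: add_scalar_prod_distrib[of _ n])
  then have R: "transvec (2 \<cdot>\<^sub>v u + u') (2 \<cdot>\<^sub>v w + w') v $ r
      = v $ r + v $ 0 * (2 * u $ r + u' $ r) - half * (2 * s + s') * (d + half * (2 * u $ r + u' $ r))"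
    using r v carr unfolding d_def by simp
  show "transvec u w (transvec u' w' (transvec u w v)) $ r
      = transvec (2 \<cdot>\<^sub>v u + u') (2 \<cdot>\<^sub>v w + w') v $ r"
    by (rule eq_if_diff_eq_two_half_minus_one_mult[OF h,
          where z = "half * (s * u $ r + s * u' $ r + s' * u $ r)"])
       (simp add: L R algebra_simps)
qed (use v in simp)

lemma transvec_uminus_inverse:
  assumes h: "2 * half = (1 :: 'a :: comm_ring_1)"
    and uw: "adapted_pair n M u w" and v: "v \<in> carrier_vec n"
  shows "transvec u w (transvec (- u) (- w) v) = (v :: 'a vec)"
proof (rule eq_vecI)
  fix r assume "r < dim_vec v"
  then have r: "r < n" using v by simp
  define d :: 'a where "d = (if r = 0 then 1 else 0)"
  define s where "s = w \<bullet> v"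
  have u0: "u $ 0 = 0" using r adapted_pair_index_0[OF uw] by auto
  have carr: "u \<in> carrier_vec n" "w \<in> carrier_vec n" using uw by (auto dest: adapted_pair_carrier)
  have "w \<bullet> transvec (- u) (- w) v = s"
    using scalar_prod_transvec[OF uw adapted_pair_uminus[OF uw] v] unfolding s_def .
  then have L: "transvec u w (transvec (- u) (- w) v) $ r
      = v $ r - v $ 0 * u $ r + half * s * (d - half * u $ r) + (v $ 0 + half * s) * u $ r
        - half * s * (d + half * u $ r)"
    using r v u0 carr unfolding d_def s_def by simp
  show "transvec u w (transvec (- u) (- w) v) $ r = v $ r"
    by (rule eq_if_diff_eq_two_half_minus_one_mult[OF h, where z = "- (half * s * u $ r)"])
       (simp add: L algebra_simps)
qed (use v in simp)

definition transvec_mat :: "nat \<Rightarrow> 'a :: comm_ring_1 vec \<Rightarrow> 'a vec \<Rightarrow> 'a mat" where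
  "transvec_mat n u w = mat n n (\<lambda>(i, j). transvec u w (unit_vec n j) $ i)"

lemma dim_transvec_mat [simp]:
  "dim_row (transvec_mat n u w) = n" "dim_col (transvec_mat n u w) = n"
  by (simp_all add: transvec_mat_def)

lemma transvec_mat_carrier [simp]: "transvec_mat n u w \<in> carrier_mat n n"
  by (simp add: carrier_matI)

lemma index_transvec_mat:
  assumes "i < n" "j < n" "u \<in> carrier_vec n" "w \<in> carrier_vec n"
  shows "transvec_mat n u w $$ (i, j) = (if i = j then 1 else 0) + (if j = 0 then u $ i else 0)
    - half * w $ j * ((if i = 0 then 1 else 0) + half * u $ i)"
  using assms by (simp add: transvec_mat_def)

lemma transvec_mat_mult_vec:
  assumes "u \<in> carrier_vec n" "w \<in> carrier_vec n" and v: "v \<in> carrier_vec n"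
  shows "transvec_mat n u w *\<^sub>v v = transvec u w v"
proof (rule eq_vecI)
  fix r assume "r < dim_vec (transvec u w v)"
  then have r: "r < n" using v by simp
  define c where "c = half * ((if r = 0 then 1 else 0) + half * u $ r)"
  have "row (transvec_mat n u w) r = unit_vec n r + u $ r \<cdot>\<^sub>v unit_vec n 0 - c \<cdot>\<^sub>v w"
    using r assms by (intro eq_vecI) (auto simp: index_transvec_mat c_def algebra_simps)
  then have "(transvec_mat n u w *\<^sub>v v) $ r = v $ r + u $ r * v $ 0 - c * (w \<bullet> v)"
    using r assms by (simp add: add_scalar_prod_distrib[of _ n] minus_scalar_prod_distrib[of _ n])
  then show "(transvec_mat n u w *\<^sub>v v) $ r = transvec u w v $ r"
    using r v by (simp add: c_def algebra_simps)
qed (use v in simp)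

lemma eq_mat_by_mult_vec:
  assumes A: "A \<in> carrier_mat n n" and B: "B \<in> carrier_mat n n"
    and eq: "\<And>v. v \<in> carrier_vec n \<Longrightarrow> A *\<^sub>v v = B *\<^sub>v (v :: 'a :: semiring_1 vec)"
  shows "A = B"
proof (rule eq_matI)
  fix i j assume "i < dim_row B" "j < dim_col B"
  then have ij: "i < n" "j < n" using B by auto
  have "A $$ (i, j) = (A *\<^sub>v unit_vec n j) $ i" "B $$ (i, j) = (B *\<^sub>v unit_vec n j) $ i"
    using A B ij by simp_all
  then show "A $$ (i, j) = B $$ (i, j)" using eq[of "unit_vec n j"] by simp
qed (use A B in auto)

lemma transvec_mat_sandwich:
  assumes h: "2 * half = (1 :: 'a :: comm_ring_1)"
    and uw: "adapted_pair n M u w" and uw': "adapted_pair n M u' w'"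
  shows "transvec_mat n u w * transvec_mat n u' w' * transvec_mat n u w
    = transvec_mat n (2 \<cdot>\<^sub>v u + u') (2 \<cdot>\<^sub>v w + (w' :: 'a vec))"
proof (rule eq_mat_by_mult_vec)
  fix v :: "'a vec" assume v: "v \<in> carrier_vec n"
  have carr: "u \<in> carrier_vec n" "u' \<in> carrier_vec n" "w \<in> carrier_vec n" "w' \<in> carrier_vec n"
    using uw uw' by (auto dest: adapted_pair_carrier)
  have "transvec_mat n u w * transvec_mat n u' w' * transvec_mat n u w *\<^sub>v v
    = transvec_mat n u w *\<^sub>v (transvec_mat n u' w' *\<^sub>v (transvec_mat n u w *\<^sub>v v))"
    using v
    by (simp add: assoc_mult_mat_vec[of _ n n _ n] mult_carrier_mat[of _ n n] mult_mat_vec_carrier[of _ n n])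
  then show "transvec_mat n u w * transvec_mat n u' w' * transvec_mat n u w *\<^sub>v v
    = transvec_mat n (2 \<cdot>\<^sub>v u + u') (2 \<cdot>\<^sub>v w + w') *\<^sub>v v"
    using v carr by (simp add: transvec_mat_mult_vec transvec_sandwich[OF h uw uw' v])
qed (simp_all add: mult_carrier_mat[of _ n n])

lemma transvec_mat_uminus_inverse:
  assumes h: "2 * half = (1 :: 'a :: comm_ring_1)" and uw: "adapted_pair n M u w"
  shows "transvec_mat n u w * transvec_mat n (- u) (- w) = (1\<^sub>m n :: 'a mat)"
proof (rule eq_mat_by_mult_vec)
  fix v :: "'a vec" assume v: "v \<in> carrier_vec n"
  have carr: "u \<in> carrier_vec n" "w \<in> carrier_vec n"
    using uw by (auto dest: adapted_pair_carrier)
  then show "transvec_mat n u w * transvec_mat n (- u) (- w) *\<^sub>v v = 1\<^sub>m n *\<^sub>v v"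
    using v
    by (simp add: assoc_mult_mat_vec[of _ n n _ n] transvec_mat_mult_vec transvec_uminus_inverse[OF h uw v])
qed (simp_all add: mult_carrier_mat[of _ n n])

definition invertible_mats :: "nat \<Rightarrow> 'a :: comm_ring_1 mat set" where
  "invertible_mats n = Units (ring_mat TYPE('a) n ())"

lemma transvec_mat_invertible:
  assumes h: "2 * half = (1 :: 'a :: comm_ring_1)" and uw: "adapted_pair n M u (w :: 'a vec)"
  shows "transvec_mat n u w \<in> invertible_mats n"
  using transvec_mat_uminus_inverse[OF h uw] transvec_mat_uminus_inverse[OF h adapted_pair_uminus[OF uw]]
  unfolding invertible_mats_def Units_def ring_mat_simps
  by (intro CollectI conjI bexI[of _ "transvec_mat n (- u) (- w)"]) simp_all

lemma F1_eq_transvec_mat: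
  assumes h: "2 * half = (1 :: 'a :: comm_ring_1)" and i: "1 \<le> i" "2 * i < N"
  shows "F1 N i (- (half * (t :: 'a)))
    = transvec_mat N (t \<cdot>\<^sub>v unit_vec N (2 * i - 1)) (t \<cdot>\<^sub>v unit_vec N (2 * i))"
proof -
  have "t = 2 * half * t" using h by simp
  then show ?thesis
    using i by (intro eq_matI) (auto simp: F1_def munit_def index_transvec_mat algebra_simps)
qed

lemma F2_eq_transvec_mat:
  assumes h: "2 * half = (1 :: 'a :: comm_ring_1)" and i: "1 \<le> i" "2 * i < N"
  shows "F2 N i (- (half * (t :: 'a)))
    = transvec_mat N (t \<cdot>\<^sub>v unit_vec N (2 * i)) (t \<cdot>\<^sub>v unit_vec N (2 * i - 1))"
proof -
  have "t = 2 * half * t" using h by simp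
  then show ?thesis
    using i by (intro eq_matI) (auto simp: F2_def munit_def index_transvec_mat algebra_simps)
qed

lemma sum_lessThan_odd_even:
  "(\<Sum>k<2 * (m :: nat) + 1. f k) = f 0 + (\<Sum>i=1..m. f (2 * i - 1) + (f (2 * i) :: 'a :: comm_monoid_add))"
  by (induction m) (simp_all add: ac_simps)

lemma dim_coords [simp]: "dim_vec (coords m x) = 2 * m + 1"
  by (simp add: coords_def split: prod.split)

lemma index_coords:
  "coords m (z, y, g) $ 0 = z"
  "1 \<le> i \<Longrightarrow> i \<le> m \<Longrightarrow> coords m (z, y, g) $ (2 * i - 1) = y i"
  "1 \<le> i \<Longrightarrow> i \<le> m \<Longrightarrow> coords m (z, y, g) $ (2 * i) = g i"
  by (auto simp: coords_def elim!: oddE)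

lemma coords_elt_of: "v \<in> carrier_vec (2 * m + 1) \<Longrightarrow> coords m (elt_of m v) = v"
  by (intro eq_vecI) (auto simp: coords_def elt_of_def Suc_le_eq elim!: oddE evenE)

lemma coords_cong:
  assumes "\<And>i. 1 \<le> i \<Longrightarrow> i \<le> m \<Longrightarrow> y i = y' i \<and> g i = g' i"
  shows "coords m (z, y, g) = coords m (z, y', g')"
  using assms by (intro eq_vecI) (auto simp: coords_def elim!: oddE evenE)

lemma coords_y_lincomb:
  "coords m (0, \<lambda>i. c * y i + y' i, \<lambda>_. 0) = c \<cdot>\<^sub>v coords m (0, y, \<lambda>_. 0) + coords m (0, y', \<lambda>_. 0)"
  by (intro eq_vecI) (simp_all add: coords_def)

lemma coords_g_lincomb:
  "coords m (0, \<lambda>_. 0, \<lambda>i. c * g i + g' i) = c \<cdot>\<^sub>v coords m (0, \<lambda>_. 0, g) + coords m (0, \<lambda>_. 0, g')"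
  by (intro eq_vecI) (simp_all add: coords_def)

lemma coords_single_y:
  "1 \<le> i \<Longrightarrow> i \<le> m \<Longrightarrow>
    coords m (0, \<lambda>k. if k = i then t else 0, \<lambda>_. 0) = t \<cdot>\<^sub>v unit_vec (2 * m + 1) (2 * i - 1)"
  by (intro eq_vecI) (auto simp: coords_def elim!: oddE)

lemma coords_single_g:
  "1 \<le> i \<Longrightarrow> i \<le> m \<Longrightarrow>
    coords m (0, \<lambda>_. 0, \<lambda>k. if k = i then t else 0) = t \<cdot>\<^sub>v unit_vec (2 * m + 1) (2 * i)"
  by (intro eq_vecI) (auto simp: coords_def elim!: evenE)

lemma scalar_prod_coords_pairing:
  "coords m (0, b, \<lambda>_. 0) \<bullet> coords m (z, y, g) = pairing m b y"
  "coords m (0, \<lambda>_. 0, a) \<bullet> coords m (z, y, g) = pairing m g a"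
  unfolding scalar_prod_def dim_coords atLeast0LessThan sum_lessThan_odd_even index_coords(1) pairing_def
  by (auto simp: index_coords index_coords(2)[simplified] mult.commute[of "g _"] intro!: sum.cong)

lemma adapted_pair_coords_alpha:
  "adapted_pair (2 * m + 1) {k. odd k} (coords m (0, a, \<lambda>_. 0)) (coords m (0, \<lambda>_. 0, a))"
  by (simp add: adapted_pair_def carrier_vecI coords_def)

lemma adapted_pair_coords_beta:
  "adapted_pair (2 * m + 1) {k. even k} (coords m (0, \<lambda>_. 0, b)) (coords m (0, b, \<lambda>_. 0))"
  by (simp add: adapted_pair_def carrier_vecI coords_def)

lemma coords_E_alpha:
  assumes h: "2 * half = (1 :: 'a :: comm_ring_1)"
  shows "coords m (E_alpha m a x)
    = transvec (coords m (0, a, \<lambda>_. 0)) (coords m (0, \<lambda>_. 0, a)) (coords m (x :: 'a \<times> _))"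
proof -
  obtain z y g where x: "x = (z, y, g)" by (cases x) auto
  show ?thesis
    using scalar_prod_coords_pairing(2)[of m a z y g] unfolding x
    by (intro eq_vecI) (auto simp: coords_def E_alpha_def adj_alpha_eq[OF h] linmap_def algebra_simps)
qed

lemma coords_E_beta:
  assumes h: "2 * half = (1 :: 'a :: comm_ring_1)"
  shows "coords m (E_beta m b x)
    = transvec (coords m (0, \<lambda>_. 0, b)) (coords m (0, b, \<lambda>_. 0)) (coords m (x :: 'a \<times> _))"
proof -
  obtain z y g where x: "x = (z, y, g)" by (cases x) auto
  show ?thesis
    using scalar_prod_coords_pairing(1)[of m b z y g] unfolding x
    by (intro eq_vecI) (auto simp: coords_def E_beta_def adj_beta_eq[OF h] linmap_def algebra_simps)
qed

lemma mat_of_map_E_alpha: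
  assumes h: "2 * half = (1 :: 'a :: comm_ring_1)"
  shows "mat_of_map m (E_alpha m a)
    = transvec_mat (2 * m + 1) (coords m (0, a, \<lambda>_. 0)) (coords m (0, \<lambda>_. 0, a :: nat \<Rightarrow> 'a))"
  by (intro eq_matI) (simp_all add: mat_of_map_def transvec_mat_def coords_E_alpha[OF h] coords_elt_of)

lemma mat_of_map_E_beta:
  assumes h: "2 * half = (1 :: 'a :: comm_ring_1)"
  shows "mat_of_map m (E_beta m b)
    = transvec_mat (2 * m + 1) (coords m (0, \<lambda>_. 0, b)) (coords m (0, b, \<lambda>_. 0 :: 'a))"
  by (intro eq_matI) (simp_all add: mat_of_map_def transvec_mat_def coords_E_beta[OF h] coords_elt_of)

lemma mat_of_map_E_alpha_sandwich:
  assumes h: "2 * half = (1 :: 'a :: comm_ring_1)"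
  shows "mat_of_map m (E_alpha m (\<lambda>i. x i + c i)) = mat_of_map m (E_alpha m (\<lambda>i. half * x i))
    * mat_of_map m (E_alpha m c) * mat_of_map m (E_alpha m (\<lambda>i. half * (x i :: 'a)))"
proof -
  have "(\<lambda>i. x i + c i) = (\<lambda>i. 2 * (half * x i) + c i)"
    using h by (simp add: mult.assoc[symmetric])
  then have "mat_of_map m (E_alpha m (\<lambda>i. x i + c i))
    = transvec_mat (2 * m + 1) (2 \<cdot>\<^sub>v coords m (0, \<lambda>i. half * x i, \<lambda>_. 0) + coords m (0, c, \<lambda>_. 0))
        (2 \<cdot>\<^sub>v coords m (0, \<lambda>_. 0, \<lambda>i. half * x i) + coords m (0, \<lambda>_. 0, c))"
    unfolding mat_of_map_E_alpha[OF h] coords_y_lincomb[symmetric] coords_g_lincomb[symmetric] by simp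
  also have "\<dots> = mat_of_map m (E_alpha m (\<lambda>i. half * x i)) * mat_of_map m (E_alpha m c)
      * mat_of_map m (E_alpha m (\<lambda>i. half * x i))"
    unfolding mat_of_map_E_alpha[OF h]
    by (rule transvec_mat_sandwich[OF h adapted_pair_coords_alpha adapted_pair_coords_alpha, symmetric])
  finally show ?thesis .
qed

lemma mat_of_map_E_beta_sandwich:
  assumes h: "2 * half = (1 :: 'a :: comm_ring_1)"
  shows "mat_of_map m (E_beta m (\<lambda>i. x i + c i)) = mat_of_map m (E_beta m (\<lambda>i. half * x i))
    * mat_of_map m (E_beta m c) * mat_of_map m (E_beta m (\<lambda>i. half * (x i :: 'a)))"
proof -
  have "(\<lambda>i. x i + c i) = (\<lambda>i. 2 * (half * x i) + c i)"
    using h by (simp add: mult.assoc[symmetric])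
  then have "mat_of_map m (E_beta m (\<lambda>i. x i + c i))
    = transvec_mat (2 * m + 1) (2 \<cdot>\<^sub>v coords m (0, \<lambda>_. 0, \<lambda>i. half * x i) + coords m (0, \<lambda>_. 0, c))
        (2 \<cdot>\<^sub>v coords m (0, \<lambda>i. half * x i, \<lambda>_. 0) + coords m (0, c, \<lambda>_. 0))"
    unfolding mat_of_map_E_beta[OF h] coords_y_lincomb[symmetric] coords_g_lincomb[symmetric] by simp
  also have "\<dots> = mat_of_map m (E_beta m (\<lambda>i. half * x i)) * mat_of_map m (E_beta m c)
      * mat_of_map m (E_beta m (\<lambda>i. half * x i))"
    unfolding mat_of_map_E_beta[OF h]
    by (rule transvec_mat_sandwich[OF h adapted_pair_coords_beta adapted_pair_coords_beta, symmetric])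
  finally show ?thesis .
qed

lemma mat_of_map_E_alpha_cong:
  assumes h: "2 * half = (1 :: 'a :: comm_ring_1)" and "\<And>i. 1 \<le> i \<Longrightarrow> i \<le> m \<Longrightarrow> a i = b i"
  shows "mat_of_map m (E_alpha m a) = mat_of_map m (E_alpha m (b :: nat \<Rightarrow> 'a))"
proof -
  have "coords m (0, a, \<lambda>_. 0) = coords m (0, b, \<lambda>_. 0)" "coords m (0, \<lambda>_. 0, a) = coords m (0, \<lambda>_. 0, b)"
    using assms(2) by (auto intro: coords_cong)
  then show ?thesis unfolding mat_of_map_E_alpha[OF h] by simp
qed

lemma mat_of_map_E_beta_cong:
  assumes h: "2 * half = (1 :: 'a :: comm_ring_1)" and "\<And>i. 1 \<le> i \<Longrightarrow> i \<le> m \<Longrightarrow> a i = b i"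
  shows "mat_of_map m (E_beta m a) = mat_of_map m (E_beta m (b :: nat \<Rightarrow> 'a))"
proof -
  have "coords m (0, a, \<lambda>_. 0) = coords m (0, b, \<lambda>_. 0)" "coords m (0, \<lambda>_. 0, a) = coords m (0, \<lambda>_. 0, b)"
    using assms(2) by (auto intro: coords_cong)
  then show ?thesis unfolding mat_of_map_E_beta[OF h] by simp
qed

lemma mat_of_map_E_alpha_single:
  assumes h: "2 * half = (1 :: 'a :: comm_ring_1)" and i: "1 \<le> i" "i \<le> m"
  shows "mat_of_map m (E_alpha m (\<lambda>k. if k = i then t else 0)) = F1 (2 * m + 1) i (- (half * (t :: 'a)))"
  using i by (simp add: mat_of_map_E_alpha[OF h] coords_single_y coords_single_g F1_eq_transvec_mat[OF h])

lemma mat_of_map_E_beta_single: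
  assumes h: "2 * half = (1 :: 'a :: comm_ring_1)" and i: "1 \<le> i" "i \<le> m"
  shows "mat_of_map m (E_beta m (\<lambda>k. if k = i then t else 0)) = F2 (2 * m + 1) i (- (half * (t :: 'a)))"
  using i by (simp add: mat_of_map_E_beta[OF h] coords_single_y coords_single_g F2_eq_transvec_mat[OF h])

lemma F1_eq_mat_of_map_E_alpha:
  assumes h: "2 * half = (1 :: 'a :: comm_ring_1)" and i: "1 \<le> i" "i \<le> m"
  shows "F1 (2 * m + 1) i l = mat_of_map m (E_alpha m (\<lambda>k. if k = i then - (2 * l) else (0 :: 'a)))"
proof -
  have "- (half * - (2 * l)) = l" using h by (simp add: mult.assoc[symmetric] mult.commute[of half 2])
  then show ?thesis using mat_of_map_E_alpha_single[OF h i, of "- (2 * l)"] by simp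
qed

lemma F2_eq_mat_of_map_E_beta:
  assumes h: "2 * half = (1 :: 'a :: comm_ring_1)" and i: "1 \<le> i" "i \<le> m"
  shows "F2 (2 * m + 1) i l = mat_of_map m (E_beta m (\<lambda>k. if k = i then - (2 * l) else (0 :: 'a)))"
proof -
  have "- (half * - (2 * l)) = l" using h by (simp add: mult.assoc[symmetric] mult.commute[of half 2])
  then show ?thesis using mat_of_map_E_beta_single[OF h i, of "- (2 * l)"] by simp
qed

lemma mat_of_map_E_alpha_invertible:
  assumes h: "2 * half = (1 :: 'a :: comm_ring_1)"
  shows "mat_of_map m (E_alpha m (a :: nat \<Rightarrow> 'a)) \<in> invertible_mats (2 * m + 1)"
  unfolding mat_of_map_E_alpha[OF h] by (rule transvec_mat_invertible[OF h adapted_pair_coords_alpha])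

lemma mat_of_map_E_beta_invertible:
  assumes h: "2 * half = (1 :: 'a :: comm_ring_1)"
  shows "mat_of_map m (E_beta m (b :: nat \<Rightarrow> 'a)) \<in> invertible_mats (2 * m + 1)"
  unfolding mat_of_map_E_beta[OF h] by (rule transvec_mat_invertible[OF h adapted_pair_coords_beta])

definition mat_subgroup :: "nat \<Rightarrow> 'a :: comm_ring_1 mat set \<Rightarrow> bool" where
  "mat_subgroup n H \<longleftrightarrow> H \<subseteq> carrier_mat n n \<and> 1\<^sub>m n \<in> H \<and> (\<forall>A\<in>H. \<forall>B\<in>H. A * B \<in> H)
     \<and> (\<forall>A\<in>H. \<exists>B\<in>H. A * B = 1\<^sub>m n \<and> B * A = 1\<^sub>m n)"

lemma gen_group_eq: "gen_group n S = \<Inter> {H. mat_subgroup n H \<and> S \<subseteq> H}"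
  unfolding gen_group_def mat_subgroup_def by (simp add: conj_assoc)

lemma gen_group_least: "mat_subgroup n H \<Longrightarrow> S \<subseteq> H \<Longrightarrow> gen_group n S \<subseteq> H"
  unfolding gen_group_eq by blast

lemma generators_subset_gen_group: "S \<subseteq> gen_group n S"
  unfolding gen_group_eq by blast

lemma gen_group_mono: "S \<subseteq> T \<Longrightarrow> gen_group n S \<subseteq> gen_group n T"
  unfolding gen_group_eq by blast

lemma mat_subgroup_invertible_mats: "mat_subgroup n (invertible_mats n :: 'a :: comm_ring_1 mat set)"
proof -
  interpret monoid "ring_mat TYPE('a) n ()" by (rule ring.is_monoid[OF ring_mat])
  have "x \<in> Units (ring_mat TYPE('a) n ()) \<Longrightarrow>
      x * inv\<^bsub>ring_mat TYPE('a) n ()\<^esub> x = 1\<^sub>m n \<and> inv\<^bsub>ring_mat TYPE('a) n ()\<^esub> x * x = 1\<^sub>m n" for x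
    using Units_r_inv[of x] Units_l_inv[of x] unfolding ring_mat_simps by simp
  then show ?thesis
    unfolding mat_subgroup_def invertible_mats_def
    using Units_closed Units_one_closed Units_m_closed Units_inv_closed
    unfolding ring_mat_simps by blast
qed

text \<open>The hypothesis on \<open>S\<close> matters: if some generator is not invertible, no subgroup
  contains \<open>S\<close> and \<open>gen_group n S\<close> is the universal set.\<close>
lemma mat_subgroup_gen_group:
  assumes S: "S \<subseteq> invertible_mats n"
  shows "mat_subgroup n (gen_group n (S :: 'a :: comm_ring_1 mat set))"
proof -
  interpret monoid "ring_mat TYPE('a) n ()" by (rule ring.is_monoid[OF ring_mat])
  let ?inv = "m_inv (ring_mat TYPE('a) n ())"
  have units: "gen_group n S \<subseteq> Units (ring_mat TYPE('a) n ())"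
    using gen_group_least[OF mat_subgroup_invertible_mats S] unfolding invertible_mats_def .
  have inv: "A \<in> carrier_mat n n" "A * ?inv A = 1\<^sub>m n" "?inv A * A = 1\<^sub>m n"
    "?inv A \<in> carrier_mat n n" if "A \<in> gen_group n S" for A
    using that units Units_r_inv[of A] Units_l_inv[of A] Units_inv_closed[of A] Units_closed[of A]
    unfolding ring_mat_simps by auto
  have "?inv A \<in> H" if A: "A \<in> gen_group n S" and H: "mat_subgroup n H" "S \<subseteq> H" for A H
  proof -
    have "A \<in> H" using A H gen_group_least by blast
    then obtain B where B: "B \<in> H" "A * B = 1\<^sub>m n" using H(1) unfolding mat_subgroup_def by blast
    have "B \<in> carrier_mat n n" using B(1) H(1) unfolding mat_subgroup_def by blast
    then have "?inv A = B"
      using inv_unique[of "?inv A" A B] inv[OF A] B(2) unfolding ring_mat_simps by simp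
    then show ?thesis using B by simp
  qed
  then have inv_closed: "?inv A \<in> gen_group n S" if "A \<in> gen_group n S" for A
    using that by (auto simp: gen_group_eq)
  have "gen_group n S \<subseteq> carrier_mat n n" using inv(1) by blast
  moreover have "1\<^sub>m n \<in> gen_group n S" by (simp add: gen_group_eq mat_subgroup_def)
  moreover have "\<forall>A \<in> gen_group n S. \<forall>B \<in> gen_group n S. A * B \<in> gen_group n S"
    by (auto simp: gen_group_eq mat_subgroup_def)
  moreover have "\<forall>A \<in> gen_group n S. \<exists>B \<in> gen_group n S. A * B = 1\<^sub>m n \<and> B * A = 1\<^sub>m n"
    using inv(2,3) inv_closed by blast
  ultimately show ?thesis unfolding mat_subgroup_def by blast
qed

text \<open>Induction on the largest index \<open>k\<close> with \<open>a k \<noteq> 0\<close>: split off \<open>c = a k e\<^sub>k\<close> and write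
  \<open>E a = E (h x) * E c * E (h x)\<close> with \<open>x = a - c\<close>.\<close>
lemma sandwich_decomposition_mem:
  fixes E :: "(nat \<Rightarrow> 'a :: comm_ring_1) \<Rightarrow> 'b :: times"
  assumes sandwich: "\<And>x c. E (\<lambda>i. x i + c i) = E (\<lambda>i. h * x i) * E c * E (\<lambda>i. h * x i)"
    and cong: "\<And>a b. (\<And>i. 1 \<le> i \<Longrightarrow> i \<le> m \<Longrightarrow> a i = b i) \<Longrightarrow> E a = E b"
    and single: "\<And>i t. 1 \<le> i \<Longrightarrow> i \<le> m \<Longrightarrow> E (\<lambda>k. if k = i then t else 0) \<in> G"
    and mult: "\<And>A B. A \<in> G \<Longrightarrow> B \<in> G \<Longrightarrow> A * B \<in> G"
    and m: "1 \<le> m"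
  shows "E a \<in> G"
proof -
  have "E a \<in> G" if "\<And>i. k < i \<Longrightarrow> i \<le> m \<Longrightarrow> a i = 0" for k a
    using that
  proof (induction k arbitrary: a)
    case 0
    have "E a = E (\<lambda>k. if k = 1 then a 1 else 0)" by (rule cong) (use 0 in auto)
    then show ?case using single[OF order_refl m] by simp
  next
    case (Suc k)
    show ?case
    proof (cases "Suc k \<le> m")
      case False
      then show ?thesis using Suc by simp
    next
      case True
      define x where "x = a(Suc k := 0)"
      define c where "c = (\<lambda>i. if i = Suc k then a (Suc k) else 0)"
      have "(\<lambda>i. x i + c i) = a" by (auto simp: x_def c_def)
      then have "E a = E (\<lambda>i. h * x i) * E c * E (\<lambda>i. h * x i)" using sandwich by metis
      moreover have "E (\<lambda>i. h * x i) \<in> G" by (rule Suc.IH) (use Suc.prems in \<open>auto simp: x_def\<close>)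
      moreover have "E c \<in> G" unfolding c_def using True by (intro single) auto
      ultimately show ?thesis by (simp add: mult)
    qed
  qed
  from this[of m] show ?thesis by simp
qed

lemma mat_of_map_E_alpha_in_subgroup:
  assumes h: "2 * half = (1 :: 'a :: comm_ring_1)" and m: "1 \<le> m"
    and H: "mat_subgroup (2 * m + 1) H"
    and F1: "\<And>i l. 1 \<le> i \<Longrightarrow> i \<le> m \<Longrightarrow> F1 (2 * m + 1) i l \<in> H"
  shows "mat_of_map m (E_alpha m a) \<in> (H :: 'a mat set)"
proof (rule sandwich_decomposition_mem[OF mat_of_map_E_alpha_sandwich[OF h] mat_of_map_E_alpha_cong[OF h]])
  fix i t assume "1 \<le> i" "i \<le> m"
  then show "mat_of_map m (E_alpha m (\<lambda>k. if k = i then t else 0)) \<in> H"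
    using F1 by (simp add: mat_of_map_E_alpha_single[OF h])
qed (use H m in \<open>auto simp: mat_subgroup_def\<close>)

lemma mat_of_map_E_beta_in_subgroup:
  assumes h: "2 * half = (1 :: 'a :: comm_ring_1)" and m: "1 \<le> m"
    and H: "mat_subgroup (2 * m + 1) H"
    and F2: "\<And>i l. 1 \<le> i \<Longrightarrow> i \<le> m \<Longrightarrow> F2 (2 * m + 1) i l \<in> H"
  shows "mat_of_map m (E_beta m b) \<in> (H :: 'a mat set)"
proof (rule sandwich_decomposition_mem[OF mat_of_map_E_beta_sandwich[OF h] mat_of_map_E_beta_cong[OF h]])
  fix i t assume "1 \<le> i" "i \<le> m"
  then show "mat_of_map m (E_beta m (\<lambda>k. if k = i then t else 0)) \<in> H"
    using F2 by (simp add: mat_of_map_E_beta_single[OF h])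
qed (use H m in \<open>auto simp: mat_subgroup_def\<close>)

theorem mainTheorem4:
  fixes m :: nat
  assumes "m \<ge> 1"
    and "\<exists>u :: 'a :: comm_ring_1. 2 * u = 1"
  shows "(EO_QH m :: 'a mat set) = EO_odd m"
proof -
  have h: "2 * half = (1 :: 'a)" by (rule two_mult_half[OF assms(2)])
  let ?SQ = "{mat_of_map m (E_alpha m a) | a. True} \<union> {mat_of_map m (E_beta m b) | b. True} :: 'a mat set"
  let ?SO = "{F1 (2*m+1) i l | i l. 1 \<le> i \<and> i \<le> m} \<union> {F2 (2*m+1) i l | i l. 1 \<le> i \<and> i \<le> m} :: 'a mat set"
  have SO_SQ: "?SO \<subseteq> ?SQ"
    using F1_eq_mat_of_map_E_alpha[OF h] F2_eq_mat_of_map_E_beta[OF h] by fastforce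
  have "?SQ \<subseteq> invertible_mats (2 * m + 1)"
    using mat_of_map_E_alpha_invertible[OF h] mat_of_map_E_beta_invertible[OF h] by auto
  then have group: "mat_subgroup (2 * m + 1) (EO_odd m :: 'a mat set)"
    unfolding EO_odd_def using SO_SQ by (intro mat_subgroup_gen_group) (rule subset_trans)
  have F: "F1 (2 * m + 1) i l \<in> EO_odd m" "F2 (2 * m + 1) i l \<in> EO_odd m"
    if "1 \<le> i" "i \<le> m" for i and l :: 'a
    using that generators_subset_gen_group unfolding EO_odd_def by fastforce+
  have "?SQ \<subseteq> EO_odd m"
    using mat_of_map_E_alpha_in_subgroup[OF h assms(1) group F(1)]
      mat_of_map_E_beta_in_subgroup[OF h assms(1) group F(2)] by auto
  then have "(EO_QH m :: 'a mat set) \<subseteq> EO_odd m"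
    unfolding EO_QH_def by (rule gen_group_least[OF group])
  moreover have "EO_odd m \<subseteq> (EO_QH m :: 'a mat set)"
    unfolding EO_QH_def EO_odd_def by (rule gen_group_mono[OF SO_SQ])
  ultimately show ?thesis by (rule antisym)
qed

end
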